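(* Let $n\geq 3$. If a probability distribution $p=(p(v))_{v\in\{0,1\}^n}\in\Delta_{2^n-1}$ lies in the RBM model $M^1_n$, then every flattening of the table $(p(v))_{v\in\{0,1\}^n}$ has rank at most $2$, and $$\sigma_{ij}\,\sigma_{ik}\,\sigma_{jk}\geq 0\qquad\text{for all distinct } i,j,k\in\{1,\dots,n\}.$$
   Context: The RBM model $M^1_n$ is the subset of the open simplex $\Delta_{2^n-1}$ consisting of all vectors $(p(v))_{v\in\{0,1\}^n}$ with $p(v)=\frac1Z\beta_1^{v_1}\cdots\beta_n^{v_n}(1+\gamma\,\omega_1^{v_1}\cdots\omega_n^{v_n})$, all parameters in $\mathbb{R}_{>0}$, $Z$ the normalizing constant. For a partition $\{1,\dots,n\}=A\cup B$ into two nonempty sets, the flattening of the $2\times\cdots\times2$ table $(p(v))$ is the $2^{|A|}\times 2^{|B|}$ matrix with rows indexed by $\{0,1\}^A$, columns by $\{0,1\}^B$, whose entry in row $v_A$, column $v_B$ is $p(v)$ for the $v$ with restrictions $v_A,v_B$. For $i\neq j$, $\sigma_{ij}$ is the covariance of the binary random variables $X_i,X_j$ (the $i$-th and $j$-th coordinates of a random vector with distribution $p$), i.e. the determinant of the $2\times2$ marginal table $\bigl(\mathrm{Prob}(X_i=a,X_j=b)\bigr)_{a,b\in\{0,1\}}$. *)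

theory Defs
  imports Complex_Main "Jordan_Normal_Form.DL_Rank"
begin

definition binvecs :: "nat \<Rightarrow> (nat \<Rightarrow> nat) set" where
  "binvecs n = {v. (\<forall>i\<in>{1..n}. v i \<in> {0,1}) \<and> (\<forall>i. i \<notin> {1..n} \<longrightarrow> v i = 0)}"

definition rbm_weight ::
  "nat \<Rightarrow> (nat \<Rightarrow> real) \<Rightarrow> real \<Rightarrow> (nat \<Rightarrow> real) \<Rightarrow> (nat \<Rightarrow> nat) \<Rightarrow> real" where
  "rbm_weight n \<beta> \<gamma> \<omega> v =
     (\<Prod>i\<in>{1..n}. \<beta> i ^ v i) * (1 + \<gamma> * (\<Prod>i\<in>{1..n}. \<omega> i ^ v i))"

definition in_RBM1 :: "nat \<Rightarrow> ((nat \<Rightarrow> nat) \<Rightarrow> real) \<Rightarrow> bool" where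
  "in_RBM1 n p \<longleftrightarrow>
     (\<exists>\<beta> \<gamma> \<omega>. (\<forall>i\<in>{1..n}. \<beta> i > 0 \<and> \<omega> i > 0) \<and> \<gamma> > 0 \<and>
        (\<forall>v\<in>binvecs n. p v = rbm_weight n \<beta> \<gamma> \<omega> v /
                             (\<Sum>w\<in>binvecs n. rbm_weight n \<beta> \<gamma> \<omega> w)))"

text \<open>Decoding of a natural number r < 2^|S| as a 0/1 assignment on S:
  the k-th smallest element of S gets bit k of r.\<close>
definition decode_bits :: "nat set \<Rightarrow> nat \<Rightarrow> nat \<Rightarrow> nat" where
  "decode_bits S r i = (r div 2 ^ card {a\<in>S. a < i}) mod 2"

text \<open>Flattening of the table p along A | B (B = complement of A in {1..n}):
  rows indexed by {0,1}^A, columns by {0,1}^B (via the bijection decode_bits).\<close>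
definition flattening :: "nat \<Rightarrow> ((nat \<Rightarrow> nat) \<Rightarrow> real) \<Rightarrow> nat set \<Rightarrow> real mat" where
  "flattening n p A =
     (let B = {1..n} - A in
      mat (2 ^ card A) (2 ^ card B)
        (\<lambda>(r, c). p (\<lambda>i. if i \<in> A then decode_bits A r i
                         else if i \<in> B then decode_bits B c i else 0)))"

definition mat_rank :: "real mat \<Rightarrow> nat" where
  "mat_rank M = vec_space.rank (dim_row M) M"

definition marg2 :: "nat \<Rightarrow> ((nat \<Rightarrow> nat) \<Rightarrow> real) \<Rightarrow> nat \<Rightarrow> nat \<Rightarrow> nat \<Rightarrow> nat \<Rightarrow> real" where
  "marg2 n p i j a b = (\<Sum>v\<in>{v\<in>binvecs n. v i = a \<and> v j = b}. p v)"

definition sigma :: "nat \<Rightarrow> ((nat \<Rightarrow> nat) \<Rightarrow> real) \<Rightarrow> nat \<Rightarrow> nat \<Rightarrow> real" where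
  "sigma n p i j = marg2 n p i j 0 0 * marg2 n p i j 1 1 - marg2 n p i j 0 1 * marg2 n p i j 1 0"

end

theory Submission
  imports Defs
begin

text \<open>Every distribution in the RBM model is a mixture a * prod f + b * prod g of two
  product tables with nonnegative weights and factors. Along any bipartition A | B such a
  table is a sum of two outer products, so every flattening has rank at most 2. Its 2x2
  marginals factor as well: sigma_ij = a b C_ij D_ij d_i d_j with C, D >= 0 and
  d_l = f_l(0) g_l(1) - f_l(1) g_l(0), so sigma_ij sigma_ik sigma_jk is a nonnegative
  multiple of (d_i d_j d_k)^2.\<close>

lemma binvecs_0: "binvecs 0 = {\<lambda>_. 0}"
  unfolding binvecs_def by auto

lemma binvecs_Suc: "binvecs (Suc n) = (\<lambda>(v,x). v(Suc n := x)) ` (binvecs n \<times> {0,1})"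
proof (rule equalityI; rule subsetI)
  fix w assume w: "w \<in> binvecs (Suc n)"
  have "w(Suc n := 0) \<in> binvecs n" "w (Suc n) \<in> {0,1}"
    using w unfolding binvecs_def by auto
  moreover have "w = (w(Suc n := 0))(Suc n := w (Suc n))" by simp
  ultimately show "w \<in> (\<lambda>(v,x). v(Suc n := x)) ` (binvecs n \<times> {0,1})"
    by (metis (no_types, lifting) SigmaI case_prod_conv image_eqI)
next
  fix w assume "w \<in> (\<lambda>(v,x). v(Suc n := x)) ` (binvecs n \<times> {0,1})"
  then obtain v x where "v \<in> binvecs n" "x \<in> {0,1}" "w = v(Suc n := x)" by auto
  then show "w \<in> binvecs (Suc n)" unfolding binvecs_def by auto
qed

lemma inj_on_binvecs_Suc: "inj_on (\<lambda>(v,x). v(Suc n := x)) (binvecs n \<times> {0,1})"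
proof (rule inj_onI, clarsimp)
  fix v x v' x'
  assume "v \<in> binvecs n" "v' \<in> binvecs n" "v(Suc n := x) = v'(Suc n := x')"
  moreover have "v (Suc n) = 0" "v' (Suc n) = 0"
    using calculation unfolding binvecs_def by auto
  ultimately show "v = v' \<and> x = x'"
    by (metis fun_upd_idem fun_upd_same fun_upd_upd)
qed

lemma finite_binvecs: "finite (binvecs n)"
  by (induction n) (auto simp: binvecs_0 binvecs_Suc)

lemma sum_binvecs_prod:
  "(\<Sum>v\<in>binvecs n. \<Prod>l\<in>{1..n}. g l (v l)) = (\<Prod>l\<in>{1..n}. g l 0 + g l 1 :: real)"
proof (induction n)
  case 0
  then show ?case by (simp add: binvecs_0)
next
  case (Suc n)
  have ins: "{1..Suc n} = insert (Suc n) {1..n}" by auto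
  have "(\<Sum>v\<in>binvecs (Suc n). \<Prod>l\<in>{1..Suc n}. g l (v l))
      = (\<Sum>(v,x)\<in>binvecs n \<times> {0,1}. \<Prod>l\<in>{1..Suc n}. g l ((v(Suc n := x)) l))"
    unfolding binvecs_Suc
    by (subst sum.reindex[OF inj_on_binvecs_Suc]) (simp add: case_prod_beta')
  also have "\<dots> = (\<Sum>(v,x)\<in>binvecs n \<times> {0,1}. g (Suc n) x * (\<Prod>l\<in>{1..n}. g l (v l)))"
  proof (rule sum.cong, simp, clarify)
    fix v x
    have "(\<Prod>l\<in>{1..n}. g l ((v(Suc n := x)) l)) = (\<Prod>l\<in>{1..n}. g l (v l))"
      by (rule prod.cong) auto
    then show "(\<Prod>l\<in>{1..Suc n}. g l ((v(Suc n := x)) l)) = g (Suc n) x * (\<Prod>l\<in>{1..n}. g l (v l))"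
      unfolding ins by simp
  qed
  also have "\<dots> = (\<Sum>v\<in>binvecs n. \<Sum>x\<in>{0,1}. g (Suc n) x * (\<Prod>l\<in>{1..n}. g l (v l)))"
    by (subst sum.cartesian_product) simp
  also have "\<dots> = (g (Suc n) 0 + g (Suc n) 1) * (\<Sum>v\<in>binvecs n. \<Prod>l\<in>{1..n}. g l (v l))"
    by (simp add: sum_distrib_left algebra_simps sum.distrib)
  also have "\<dots> = (\<Prod>l\<in>{1..Suc n}. g l 0 + g l 1)"
    unfolding Suc ins by simp
  finally show ?case .
qed

lemma sum_binvecs_prod_fixed2:
  assumes ij: "i \<in> {1..n}" "j \<in> {1..n}" "i \<noteq> j" and ab: "a \<in> {0,1}" "b \<in> {0,1}"
  shows "(\<Sum>v\<in>{v\<in>binvecs n. v i = a \<and> v j = b}. \<Prod>l\<in>{1..n}. f l (v l))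
       = f i a * f j b * (\<Prod>l\<in>{1..n}-{i,j}. f l 0 + f l 1 :: real)"
proof -
  \<comment> \<open>Kill the factors at i and j on the wrong values, then sum over the whole cube.\<close>
  define g where "g l x = (if (l = i \<and> x \<noteq> a) \<or> (l = j \<and> x \<noteq> b) then 0 else f l x)" for l x
  have "(\<Sum>v\<in>{v\<in>binvecs n. v i = a \<and> v j = b}. \<Prod>l\<in>{1..n}. f l (v l))
      = (\<Sum>v\<in>binvecs n. if v i = a \<and> v j = b then \<Prod>l\<in>{1..n}. f l (v l) else 0)"
    by (rule sum.inter_filter[OF finite_binvecs])
  also have "\<dots> = (\<Sum>v\<in>binvecs n. \<Prod>l\<in>{1..n}. g l (v l))"
  proof (rule sum.cong, simp)
    fix v
    show "(if v i = a \<and> v j = b then \<Prod>l\<in>{1..n}. f l (v l) else 0) = (\<Prod>l\<in>{1..n}. g l (v l))"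
    proof (cases "v i = a \<and> v j = b")
      case True
      then show ?thesis by (auto intro!: prod.cong simp: g_def)
    next
      case False
      then have "\<exists>l\<in>{1..n}. g l (v l) = 0" using ij by (auto simp: g_def)
      then have "(\<Prod>l\<in>{1..n}. g l (v l)) = 0" by (simp add: prod_zero_iff)
      then show ?thesis using False by (simp only: if_False)
    qed
  qed
  also have "\<dots> = (\<Prod>l\<in>{1..n}. g l 0 + g l 1)" by (rule sum_binvecs_prod)
  also have "\<dots> = (g i 0 + g i 1) * (\<Prod>l\<in>{1..n}-{i}. g l 0 + g l 1)"
    using ij by (simp add: prod.remove)
  also have "(\<Prod>l\<in>{1..n}-{i}. g l 0 + g l 1) = (g j 0 + g j 1) * (\<Prod>l\<in>{1..n}-{i}-{j}. g l 0 + g l 1)"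
    using ij by (intro prod.remove) auto
  also have "(\<Prod>l\<in>{1..n}-{i}-{j}. g l 0 + g l 1) = (\<Prod>l\<in>{1..n}-{i,j}. f l 0 + f l 1)"
    by (rule prod.cong) (auto simp: g_def)
  also have "g i 0 + g i 1 = f i a" using ab ij by (auto simp: g_def)
  also have "g j 0 + g j 1 = f j b" using ab ij by (auto simp: g_def)
  finally show ?thesis by (simp only: mult.assoc)
qed

lemma marg2_mixture_of_products:
  assumes p: "\<forall>v\<in>binvecs n. p v = a * (\<Prod>l\<in>{1..n}. f l (v l)) + b * (\<Prod>l\<in>{1..n}. g l (v l))"
    and ij: "i \<in> {1..n}" "j \<in> {1..n}" "i \<noteq> j" and xy: "x \<in> {0,1}" "y \<in> {0,1}"
  shows "marg2 n p i j x y = a * f i x * f j y * (\<Prod>l\<in>{1..n}-{i,j}. f l 0 + f l 1)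
                           + b * g i x * g j y * (\<Prod>l\<in>{1..n}-{i,j}. g l 0 + g l 1)"
    (is "_ = ?rhs")
proof -
  let ?S = "{v\<in>binvecs n. v i = x \<and> v j = y}"
  have "marg2 n p i j x y
      = a * (\<Sum>v\<in>?S. \<Prod>l\<in>{1..n}. f l (v l)) + b * (\<Sum>v\<in>?S. \<Prod>l\<in>{1..n}. g l (v l))"
    unfolding marg2_def using p by (simp add: sum.distrib sum_distrib_left)
  also have "\<dots> = ?rhs"
    unfolding sum_binvecs_prod_fixed2[OF ij xy] by (simp only: mult.assoc)
  finally show ?thesis .
qed

lemma sigma_mixture_of_products:
  assumes p: "\<forall>v\<in>binvecs n. p v = a * (\<Prod>l\<in>{1..n}. f l (v l)) + b * (\<Prod>l\<in>{1..n}. g l (v l))"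
    and ij: "i \<in> {1..n}" "j \<in> {1..n}" "i \<noteq> j"
  shows "sigma n p i j = a * b * (\<Prod>l\<in>{1..n}-{i,j}. f l 0 + f l 1) * (\<Prod>l\<in>{1..n}-{i,j}. g l 0 + g l 1)
                         * (f i 0 * g i 1 - f i 1 * g i 0) * (f j 0 * g j 1 - f j 1 * g j 0)"
  unfolding sigma_def using marg2_mixture_of_products[OF p ij]
  by (simp add: algebra_simps)

lemma sigma_triple_nonneg_mixture_of_products:
  fixes f g :: "nat \<Rightarrow> nat \<Rightarrow> real"
  assumes p: "\<forall>v\<in>binvecs n. p v = a * (\<Prod>l\<in>{1..n}. f l (v l)) + b * (\<Prod>l\<in>{1..n}. g l (v l))"
    and nonneg: "a \<ge> 0" "b \<ge> 0" "\<And>l x. f l x \<ge> 0" "\<And>l x. g l x \<ge> 0"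
    and ijk: "i \<in> {1..n}" "j \<in> {1..n}" "k \<in> {1..n}" "i \<noteq> j" "i \<noteq> k" "j \<noteq> k"
  shows "sigma n p i j * sigma n p i k * sigma n p j k \<ge> 0"
proof -
  define K where "K u w = a * b * (\<Prod>l\<in>{1..n}-{u,w}. f l 0 + f l 1) * (\<Prod>l\<in>{1..n}-{u,w}. g l 0 + g l 1)"
    for u w
  define d where "d l = f l 0 * g l 1 - f l 1 * g l 0" for l
  have K_nonneg: "K u w \<ge> 0" for u w
    unfolding K_def using nonneg by (simp add: prod_nonneg add_nonneg_nonneg)
  have sigma_eq: "sigma n p u w = K u w * d u * d w"
    if "u \<in> {1..n}" "w \<in> {1..n}" "u \<noteq> w" for u w
    unfolding K_def d_def using sigma_mixture_of_products[OF p that] by (simp only: mult.assoc)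
  have "sigma n p i j * sigma n p i k * sigma n p j k
      = (K i j * d i * d j) * (K i k * d i * d k) * (K j k * d j * d k)"
    unfolding sigma_eq[OF ijk(1,2,4)] sigma_eq[OF ijk(1,3,5)] sigma_eq[OF ijk(2,3,6)] ..
  also have "\<dots> = K i j * K i k * K j k * (d i * d j * d k)\<^sup>2"
    unfolding power2_eq_square by (simp only: mult_ac)
  also have "\<dots> \<ge> 0"
    using K_nonneg by simp
  finally show ?thesis .
qed

lemma mat_rank_le_2_sum_of_outer_products:
  fixes M :: "real mat"
  assumes "M \<in> carrier_mat R C"
    and "\<And>r c. r < R \<Longrightarrow> c < C \<Longrightarrow> M $$ (r,c) = u0 r * w0 c + u1 r * w1 c"
  shows "mat_rank M \<le> 2"
proof -
  define M0 where "M0 = mat R C (\<lambda>(r,c). u0 r * w0 c)"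
  define M1 where "M1 = mat R C (\<lambda>(r,c). u1 r * w1 c)"
  have M0: "M0 \<in> carrier_mat R C" and M1: "M1 \<in> carrier_mat R C"
    unfolding M0_def M1_def by auto
  have "M = M0 + M1"
    using assms by (intro eq_matI) (auto simp: M0_def M1_def)
  moreover have "dim_row M = R" using assms(1) by auto
  ultimately have "mat_rank M = vec_space.rank R (M0 + M1)"
    unfolding mat_rank_def by simp
  also have "\<dots> \<le> vec_space.rank R M0 + vec_space.rank R M1"
    by (rule vec_space.rank_subadditive[OF M0 M1])
  also have "vec_space.rank R M0 \<le> 1"
    by (rule vec_space.rank_le_1_product_entries[OF M0, of u0 w0]) (auto simp: M0_def)
  also have "vec_space.rank R M1 \<le> 1"
    by (rule vec_space.rank_le_1_product_entries[OF M1, of u1 w1]) (auto simp: M1_def)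
  finally show ?thesis by simp
qed

lemma flattening_rank_le_2_mixture_of_products:
  assumes p: "\<forall>v\<in>binvecs n. p v = a * (\<Prod>l\<in>{1..n}. f l (v l)) + b * (\<Prod>l\<in>{1..n}. g l (v l))"
    and A: "A \<subseteq> {1..n}"
  shows "mat_rank (flattening n p A) \<le> 2"
proof -
  define B where "B = {1..n} - A"
  define glue where "glue r c = (\<lambda>i. if i \<in> A then decode_bits A r i
                                     else if i \<in> B then decode_bits B c i else 0)" for r c
  have fl: "flattening n p A = mat (2 ^ card A) (2 ^ card B) (\<lambda>(r,c). p (glue r c))"
    unfolding flattening_def B_def glue_def Let_def by simp
  have AB: "{1..n} = A \<union> B" "A \<inter> B = {}" "finite A" "finite B"
    using A unfolding B_def by (auto intro: finite_subset)
  have glue_binvecs: "glue r c \<in> binvecs n" for r c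
    unfolding binvecs_def glue_def decode_bits_def using AB by auto
  have prod_glue: "(\<Prod>l\<in>{1..n}. h l (glue r c l))
      = (\<Prod>l\<in>A. h l (decode_bits A r l)) * (\<Prod>l\<in>B. h l (decode_bits B c l))"
    for h :: "nat \<Rightarrow> nat \<Rightarrow> real" and r c
  proof -
    have "(\<Prod>l\<in>{1..n}. h l (glue r c l)) = (\<Prod>l\<in>A. h l (glue r c l)) * (\<Prod>l\<in>B. h l (glue r c l))"
      unfolding AB(1) using AB by (intro prod.union_disjoint) auto
    moreover have "(\<Prod>l\<in>A. h l (glue r c l)) = (\<Prod>l\<in>A. h l (decode_bits A r l))"
      by (rule prod.cong) (auto simp: glue_def)
    moreover have "(\<Prod>l\<in>B. h l (glue r c l)) = (\<Prod>l\<in>B. h l (decode_bits B c l))"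
      using AB by (intro prod.cong) (auto simp: glue_def)
    ultimately show ?thesis by simp
  qed
  show ?thesis
  proof (rule mat_rank_le_2_sum_of_outer_products)
    show "flattening n p A \<in> carrier_mat (2 ^ card A) (2 ^ card B)" unfolding fl by simp
  next
    fix r c :: nat assume "r < 2 ^ card A" "c < 2 ^ card B"
    then have "flattening n p A $$ (r, c)
        = a * (\<Prod>l\<in>{1..n}. f l (glue r c l)) + b * (\<Prod>l\<in>{1..n}. g l (glue r c l))"
      unfolding fl using p glue_binvecs by simp
    then show "flattening n p A $$ (r, c) =
        (a * (\<Prod>l\<in>A. f l (decode_bits A r l))) * (\<Prod>l\<in>B. f l (decode_bits B c l)) +
        (b * (\<Prod>l\<in>A. g l (decode_bits A r l))) * (\<Prod>l\<in>B. g l (decode_bits B c l))"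
      unfolding prod_glue by (simp only: mult.assoc)
  qed
qed

lemma in_RBM1_mixture_of_products:
  assumes "in_RBM1 n p"
  obtains a b :: real and f g :: "nat \<Rightarrow> nat \<Rightarrow> real"
  where "\<forall>v\<in>binvecs n. p v = a * (\<Prod>l\<in>{1..n}. f l (v l)) + b * (\<Prod>l\<in>{1..n}. g l (v l))"
    and "a \<ge> 0" "b \<ge> 0" "\<And>l x. f l x \<ge> 0" "\<And>l x. g l x \<ge> 0"
proof -
  obtain \<beta> \<gamma> \<omega> where pos: "\<forall>i\<in>{1..n}. \<beta> i > 0 \<and> \<omega> i > 0" "\<gamma> > 0"
    and p: "\<forall>v\<in>binvecs n. p v = rbm_weight n \<beta> \<gamma> \<omega> v / (\<Sum>w\<in>binvecs n. rbm_weight n \<beta> \<gamma> \<omega> w)"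
    using assms unfolding in_RBM1_def by blast
  define Z where "Z = (\<Sum>w\<in>binvecs n. rbm_weight n \<beta> \<gamma> \<omega> w)"
  \<comment> \<open>Only the coordinates in {1..n} matter, so the factors can be made nonnegative everywhere.\<close>
  define f where "f l x = (if l \<in> {1..n} then \<beta> l ^ x else 1)" for l and x :: nat
  define g where "g l x = (if l \<in> {1..n} then (\<beta> l * \<omega> l) ^ x else 1)" for l and x :: nat
  have "(\<Prod>l\<in>{1..n}. f l (v l)) = (\<Prod>l\<in>{1..n}. \<beta> l ^ v l)"
    and "(\<Prod>l\<in>{1..n}. g l (v l)) = (\<Prod>l\<in>{1..n}. \<beta> l ^ v l) * (\<Prod>l\<in>{1..n}. \<omega> l ^ v l)" for v
    unfolding f_def g_def prod.distrib[symmetric] power_mult_distrib by (auto intro: prod.cong)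
  then have weight: "rbm_weight n \<beta> \<gamma> \<omega> v = (\<Prod>l\<in>{1..n}. f l (v l)) + \<gamma> * (\<Prod>l\<in>{1..n}. g l (v l))" for v
    unfolding rbm_weight_def by (simp add: algebra_simps)
  have f_nonneg: "f l x \<ge> 0" and g_nonneg: "g l x \<ge> 0" for l x
    using pos unfolding f_def g_def by (auto intro!: zero_le_power mult_nonneg_nonneg simp: less_imp_le)
  have "Z \<ge> 0"
    unfolding Z_def weight using f_nonneg g_nonneg pos
    by (intro sum_nonneg add_nonneg_nonneg mult_nonneg_nonneg prod_nonneg) auto
  have "\<forall>v\<in>binvecs n. p v = 1 / Z * (\<Prod>l\<in>{1..n}. f l (v l)) + \<gamma> / Z * (\<Prod>l\<in>{1..n}. g l (v l))"
    using p unfolding Z_def[symmetric] by (simp add: weight add_divide_distrib)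
  moreover have "1 / Z \<ge> 0" "\<gamma> / Z \<ge> 0"
    using \<open>Z \<ge> 0\<close> pos(2) by simp_all
  ultimately show thesis
    by (rule that) (simp_all add: f_nonneg g_nonneg)
qed

theorem corollary3p4:
  fixes n :: nat and p :: "(nat \<Rightarrow> nat) \<Rightarrow> real"
  assumes "n \<ge> 3"
    and "in_RBM1 n p"
  shows "(\<forall>A. A \<subseteq> {1..n} \<and> A \<noteq> {} \<and> A \<noteq> {1..n} \<longrightarrow> mat_rank (flattening n p A) \<le> 2)
       \<and> (\<forall>i\<in>{1..n}. \<forall>j\<in>{1..n}. \<forall>k\<in>{1..n}. i \<noteq> j \<and> i \<noteq> k \<and> j \<noteq> k \<longrightarrow>
            sigma n p i j * sigma n p i k * sigma n p j k \<ge> 0)"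
proof -
  obtain a b f g where p: "\<forall>v\<in>binvecs n. p v = a * (\<Prod>l\<in>{1..n}. f l (v l)) + b * (\<Prod>l\<in>{1..n}. g l (v l))"
    and nonneg: "a \<ge> 0" "b \<ge> 0" "\<And>l x. f l x \<ge> 0" "\<And>l x. g l x \<ge> 0"
    by (rule in_RBM1_mixture_of_products[OF assms(2)]) blast
  have "mat_rank (flattening n p A) \<le> 2" if "A \<subseteq> {1..n}" for A
    using flattening_rank_le_2_mixture_of_products[OF p that] .
  moreover have "sigma n p i j * sigma n p i k * sigma n p j k \<ge> 0"
    if "i \<in> {1..n}" "j \<in> {1..n}" "k \<in> {1..n}" "i \<noteq> j" "i \<noteq> k" "j \<noteq> k" for i j k
    using sigma_triple_nonneg_mixture_of_products[OF p nonneg that] .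
  ultimately show ?thesis
    by blast
qed

end
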